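(* Let $2\leq m<n$ be integers. Then $$\textup{res}(\Psi_m(x),\Psi_n(x))=\textup{res}(\Phi_m(x),\Phi_n(x)).$$
   Context: The Fibonacci polynomials are defined by $F_1(x)=1$, $F_2(x)=x$, and $F_n(x)=xF_{n-1}(x)+F_{n-2}(x)$ for $n\geq 3$. For $n\geq 2$, the $n$-th fibotomic polynomial $\Psi_n(x)\in\mathbb{Z}[x]$ is the product of the monic irreducible factors of $F_n(x)$ which are not factors of $F_k(x)$ for any $k<n$; also $\Psi_1(x)=1$. For $n\ge2$, $\Psi_n$ is monic of degree $\varphi(n)$ (Euler's totient). $\Phi_n(x)$ is the $n$-th cyclotomic polynomial. For monic polynomials $f,g$ with roots $a_1,\dots,a_r$ and $b_1,\dots,b_s$, the resultant is $\textup{res}(f,g)=\prod_{i,j}(a_i-b_j)$. *)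

theory Defs
  imports "HOL-Analysis.Analysis" "Subresultants.Resultant_Prelim"
begin

fun fibpoly :: "nat \<Rightarrow> int poly" where
  "fibpoly 0 = 0"
| "fibpoly (Suc 0) = 1"
| "fibpoly (Suc (Suc 0)) = [:0, 1:]"
| "fibpoly (Suc (Suc (Suc n))) = [:0, 1:] * fibpoly (Suc (Suc n)) + fibpoly (Suc n)"

definition fibotomic :: "nat \<Rightarrow> int poly" where
  "fibotomic n = (if n < 2 then 1 else
     \<Prod>{p :: int poly. monic p \<and> irreducible p \<and> p dvd fibpoly n \<and>
                      (\<forall>k\<in>{1..<n}. \<not> p dvd fibpoly k)})"

definition cyclotomic :: "nat \<Rightarrow> complex poly" where
  "cyclotomic n = (\<Prod>k\<in>{k. k < n \<and> coprime k n}. [:- cis (2 * pi * real k / real n), 1:])"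

end

theory Submission
  imports
    Defs
    "Subresultants.Subresultant_Gcd"
    "HOL-Computational_Algebra.Fundamental_Theorem_Algebra"
    "HOL-Number_Theory.Totient"
begin

(* Over the complex numbers F_n(x) = (x - r_1) ... (x - r_(n-1)) with r_k = 2 i cos(k pi / n),
   because F_n(2 i cos t) sin t = i^(n-1) sin(n t). An irreducible integer polynomial dividing
   F_n divides an earlier F_k as soon as it shares a complex root with it, so Psi_n is the
   product of x - r_k over the k coprime to n. Both resultants are therefore products of root
   differences. With u = exp(i pi j / m) and v = exp(i pi k / n) one has
   v (2 i cos(pi j / m) - 2 i cos(pi k / n)) = i (u - v) (v - 1/u); the substitution j -> m - j
   turns the second factor into u + v, so the double product becomes the product of
   u^2 - v^2 = zeta_m^j - zeta_n^k, the powers of i cancelling since the v_k multiply to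
   i^phi(n). *)

section \<open>Resultants as products of root differences\<close>

lemma resultant_mod:
  fixes f g :: "'a::field poly"
  assumes "f \<noteq> 0"
  shows "resultant f g = lead_coeff f ^ (degree g - degree (g mod f)) * resultant f (g mod f)"
proof -
  consider "degree f = 0" | "degree g < degree f" | "0 < degree f" "degree f \<le> degree g"
    by linarith
  then show ?thesis
  proof cases
    case 1
    then obtain c where "f = [:c:]" by (elim degree_eq_zeroE)
    with assms show ?thesis by (simp add: unit_imp_mod_eq_0 is_unit_const_poly_iff)
  next
    case 2
    then show ?thesis by (simp add: mod_poly_less)
  next
    case 3
    define H where "H = g mod f"
    have FGH: "g + (- (g div f)) * f = H" unfolding H_def by (simp add: minus_div_mult_eq_mod)
    have dH: "degree H < degree f"
      using 3 degree_mod_less'[OF assms, of g] unfolding H_def by (cases "g mod f = 0") auto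
    have swap: "resultant f g = (-1) ^ (degree f * degree g) * resultant g f"
      by (rule resultant_swap)
    show ?thesis
    proof (cases "degree H = 0")
      case True
      then obtain h where h: "H = [:h:]" by (elim degree_eq_zeroE)
      have "subresultant 0 g f = Polynomial.smult ((-1) ^ (degree g * degree f) * lead_coeff f ^ degree g
          * lead_coeff H ^ (degree f - 1)) H"
        using BT_lemma_1_13'[OF FGH 3(2), of 0] True dH by simp
      then have "resultant g f = (-1) ^ (degree g * degree f) * lead_coeff f ^ degree g * h ^ degree f"
        using h 3(1) by (simp add: subresultant_resultant power_Suc2[symmetric] del: power_Suc2)
      then show ?thesis using swap h True unfolding H_def
        by (simp add: mult.commute mult.left_commute flip: power_add)
    next
      case False
      have "subresultant 0 g f = Polynomial.smult
          ((-1) ^ (degree g * degree f) * lead_coeff f ^ (degree g - degree H)) (subresultant 0 f H)"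
        using BT_lemma_1_12[OF FGH 3(2), of 0] dH False by simp
      then show ?thesis using swap unfolding H_def
        by (simp add: subresultant_resultant mult.commute mult.left_commute flip: power_add)
    qed
  qed
qed

lemma lead_coeff_prod_mset_linear_factors:
  "lead_coeff (\<Prod>a\<in>#A. [:- a, 1:] :: 'a::idom poly) = 1"
  by (induction A) (simp_all add: lead_coeff_mult del: mult_pCons_left)

lemma degree_prod_mset_linear_factors:
  "degree (\<Prod>a\<in>#A. [:- a, 1:] :: 'a::idom poly) = size A"
proof (induction A)
  case (add x A)
  have "(\<Prod>a\<in>#A. [:- a, 1:]) \<noteq> (0 :: 'a poly)"
    using lead_coeff_prod_mset_linear_factors[of A] by (metis leading_coeff_0_iff zero_neq_one)
  with add show ?case by (simp add: degree_mult_eq del: mult_pCons_left)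
qed simp

lemma prod_mset_diff_swap:
  "(\<Prod>b\<in>#B. \<Prod>a\<in>#A. b - a) = (-1) ^ (size A * size B) * (\<Prod>a\<in>#A. \<Prod>b\<in>#B. a - b :: 'a::comm_ring_1)"
proof -
  have "(\<Prod>a\<in>#A. b - a) = (-1) ^ size A * (\<Prod>a\<in>#A. a - b)" for b
  proof -
    have "(\<Prod>a\<in>#A. b - a) = (\<Prod>a\<in>#A. (-1) * (a - b))" by simp
    then show ?thesis by (simp only: prod_mset.distrib prod_mset_constant)
  qed
  then have "(\<Prod>b\<in>#B. \<Prod>a\<in>#A. b - a) = ((-1) ^ size A) ^ size B * (\<Prod>b\<in>#B. \<Prod>a\<in>#A. a - b)"
    by (simp only: prod_mset.distrib prod_mset_constant)
  also have "(\<Prod>b\<in>#B. \<Prod>a\<in>#A. a - b) = (\<Prod>a\<in>#A. \<Prod>b\<in>#B. a - b)"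
    by (rule prod_mset.swap)
  finally show ?thesis by (simp only: power_mult)
qed

lemma resultant_linear_factors_swap:
  fixes f g :: "'a::idom poly"
  assumes f: "f = Polynomial.smult c (\<Prod>a\<in>#A. [:- a, 1:])" and "c \<noteq> 0"
    and g: "g = Polynomial.smult d (\<Prod>b\<in>#B. [:- b, 1:])" and "d \<noteq> 0"
    and res_gf: "resultant g f = d ^ degree f * (\<Prod>b\<in>#B. poly f b)"
  shows "resultant f g = c ^ degree g * (\<Prod>a\<in>#A. poly g a)"
proof -
  have deg_f: "degree f = size A" and deg_g: "degree g = size B"
    using assms degree_prod_mset_linear_factors[of A] degree_prod_mset_linear_factors[of B] by simp_all
  have "(\<Prod>b\<in>#B. poly f b) = (\<Prod>b\<in>#B. c * (\<Prod>a\<in>#A. b - a))"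
    by (simp add: f poly_prod_mset)
  then have poly_f: "(\<Prod>b\<in>#B. poly f b) = c ^ size B * (\<Prod>b\<in>#B. \<Prod>a\<in>#A. b - a)"
    by (simp only: prod_mset.distrib prod_mset_constant)
  have "(\<Prod>a\<in>#A. poly g a) = (\<Prod>a\<in>#A. d * (\<Prod>b\<in>#B. a - b))"
    by (simp add: g poly_prod_mset)
  then have poly_g: "(\<Prod>a\<in>#A. poly g a) = d ^ size A * (\<Prod>a\<in>#A. \<Prod>b\<in>#B. a - b)"
    by (simp only: prod_mset.distrib prod_mset_constant)
  have sign: "(-1) ^ (size A * size B) * (-1) ^ (size A * size B) = (1::'a)"
    by (simp flip: power_add)
  have "resultant f g = (-1) ^ (degree f * degree g) * resultant g f"
    by (rule resultant_swap)
  also have "\<dots> = ((-1) ^ (size A * size B) * (-1) ^ (size A * size B)) * c ^ size B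
      * (d ^ size A * (\<Prod>a\<in>#A. \<Prod>b\<in>#B. a - b))"
    unfolding res_gf poly_f prod_mset_diff_swap[where A = A and B = B] deg_f deg_g
    by (simp add: mult_ac)
  finally show ?thesis
    unfolding sign poly_g deg_g by simp
qed

(* Euclid's algorithm: g may be replaced by g mod f, and after swapping the arguments the
   induction hypothesis applies to the remainder, which has fewer roots than f. *)
lemma resultant_linear_factors_left:
  fixes g :: "'a::alg_closed_field poly"
  assumes "c \<noteq> 0"
  shows "resultant (Polynomial.smult c (\<Prod>a\<in>#A. [:- a, 1:])) g = c ^ degree g * (\<Prod>a\<in>#A. poly g a)"
  using assms
proof (induction "size A" arbitrary: A c g rule: less_induct)
  case less
  define f where "f = Polynomial.smult c (\<Prod>a\<in>#A. [:- a, 1:])"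
  have f0: "f \<noteq> 0" and deg_f: "degree f = size A" and lc_f: "lead_coeff f = c"
    using less.prems degree_prod_mset_linear_factors[of A] lead_coeff_prod_mset_linear_factors[of A]
    by (auto simp: f_def)
  define r where "r = g mod f"
  have poly_g: "poly g a = poly r a" if "a \<in># A" for a
  proof -
    have "poly f a = 0" using that by (simp add: f_def poly_prod_mset prod_mset_zero_iff)
    moreover have "poly g a = poly (g div f * f + r) a" by (simp add: r_def)
    ultimately show ?thesis by simp
  qed
  then have prod_poly_g: "(\<Prod>a\<in>#A. poly g a) = (\<Prod>a\<in>#A. poly r a)"
    by (simp cong: image_mset_cong)
  have "degree r \<le> degree g"
    using degree_mod_less[OF f0, of g] mod_poly_less[of g f] unfolding r_def
    by (cases "degree g < degree f") auto
  moreover have "resultant f g = c ^ (degree g - degree r) * resultant f r"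
    using resultant_mod[OF f0, of g] unfolding r_def lc_f .
  moreover have "resultant f r = c ^ degree r * (\<Prod>a\<in>#A. poly r a)"
  proof (cases "r = 0")
    case True
    then show ?thesis
      using poly_g deg_f f0 by (cases "A = {#}") (auto simp: f_def prod_mset_zero_iff nonempty_has_size)
  next
    case False
    obtain B where "size B = degree r"
      and r: "r = Polynomial.smult (lead_coeff r) (\<Prod>b\<in>#B. [:- b, 1:])"
      using alg_closed_imp_factorization[OF False] by blast
    moreover have "degree r < degree f"
      using degree_mod_less'[OF f0] False unfolding r_def by blast
    ultimately have "resultant r f = lead_coeff r ^ degree f * (\<Prod>b\<in>#B. poly f b)"
      using less.hyps[of B "lead_coeff r" f] False deg_f by simp
    then show ?thesis
      using resultant_linear_factors_swap[OF f_def less.prems r] False by simp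
  qed
  ultimately show ?case
    using prod_poly_g by (simp add: f_def mult.assoc flip: power_add)
qed

lemma resultant_prod_linear_factors:
  fixes a :: "'i \<Rightarrow> 'a::alg_closed_field" and b :: "'j \<Rightarrow> 'a"
  shows "resultant (\<Prod>x\<in>X. [:- a x, 1:]) (\<Prod>y\<in>Y. [:- b y, 1:]) = (\<Prod>x\<in>X. \<Prod>y\<in>Y. a x - b y)"
proof -
  have "(\<Prod>x\<in>X. [:- a x, 1:]) = Polynomial.smult 1 (\<Prod>z\<in>#image_mset a (mset_set X). [:- z, 1:])"
    by (simp add: prod_unfold_prod_mset multiset.map_comp o_def)
  then have "resultant (\<Prod>x\<in>X. [:- a x, 1:]) (\<Prod>y\<in>Y. [:- b y, 1:])
      = (\<Prod>z\<in>#image_mset a (mset_set X). poly (\<Prod>y\<in>Y. [:- b y, 1:]) z)"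
    using resultant_linear_factors_left[of 1] by simp
  also have "\<dots> = (\<Prod>x\<in>X. poly (\<Prod>y\<in>Y. [:- b y, 1:]) (a x))"
    by (simp add: prod_unfold_prod_mset multiset.map_comp o_def)
  finally show ?thesis by (simp add: poly_prod)
qed

lemma resultant_eq_0_if_common_root:
  fixes f g :: "'a::alg_closed_field poly"
  assumes "f \<noteq> 0" and "poly f z = 0" and "poly g z = 0"
  shows "resultant f g = 0"
proof -
  obtain A where f: "f = Polynomial.smult (lead_coeff f) (\<Prod>a\<in>#A. [:- a, 1:])"
    using alg_closed_imp_factorization[OF assms(1)] by blast
  have "poly f z = lead_coeff f * (\<Prod>a\<in>#A. z - a)"
    by (subst f) (simp add: poly_prod_mset)
  with assms have "z \<in># A" by (auto simp: prod_mset_zero_iff)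
  with assms(3) have "(\<Prod>a\<in>#A. poly g a) = 0" by (auto simp: prod_mset_zero_iff)
  then show ?thesis
    using resultant_linear_factors_left[of "lead_coeff f" A g] f assms(1) by simp
qed

section \<open>Irreducible factors of integer polynomials\<close>

lemma irreducible_dvd_if_common_root:
  fixes p q :: "int poly" and z :: complex
  assumes "irreducible p" and "poly (of_int_poly p) z = 0" and "poly (of_int_poly q) z = 0"
  shows "p dvd q"
proof (cases "q = 0")
  case False
  have "(of_int_poly p :: complex poly) \<noteq> 0" using assms(1) by auto
  then have "resultant (of_int_poly p) (of_int_poly q :: complex poly) = 0"
    using resultant_eq_0_if_common_root assms(2,3) by blast
  then have "resultant p q = 0" by (simp add: of_int_hom.resultant_hom)
  then have "\<not> is_unit (gcd p q)" by (auto simp: resultant_0_gcd is_unit_poly_iff)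
  moreover obtain e where e: "p = gcd p q * e" by (metis dvd_def gcd_dvd1)
  ultimately have "is_unit e" using irreducibleD[OF assms(1)] by blast
  then have "p dvd gcd p q" by (subst e) simp
  then show ?thesis using dvd_trans gcd_dvd2 by blast
qed simp

lemma poly_of_int_poly_eq_0_if_dvd:
  assumes "p dvd q" and "poly (of_int_poly p) z = (0 :: 'a::comm_ring_1)"
  shows "poly (of_int_poly q) z = 0"
  using assms by (auto simp: of_int_poly_hom.hom_mult elim!: dvdE)

lemma monic_if_normalized_dvd_monic:
  fixes p P :: "int poly"
  assumes "p dvd P" and "monic P" and "normalize p = p"
  shows "monic p"
proof -
  obtain e where e: "P = p * e" using assms(1) by blast
  then have "lead_coeff p * lead_coeff e = 1" using assms(2) by (simp add: lead_coeff_mult)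
  then have "lead_coeff p dvd 1" by (metis dvd_triv_left)
  then have "lead_coeff p = 1 \<or> lead_coeff p = -1" by (simp add: zdvd1_eq abs_eq_iff')
  moreover have "p \<noteq> 0" using e assms(2) by auto
  then have "unit_factor (lead_coeff p) = 1"
    using assms(3) unit_factor_normalize[of p] by (simp add: unit_factor_poly_def)
  ultimately show ?thesis by auto
qed

lemma monic_irreducible_dvd_iff_prime_factor:
  fixes p P :: "int poly"
  assumes "monic P"
  shows "monic p \<and> irreducible p \<and> p dvd P \<longleftrightarrow> p \<in> prime_factors P"
proof -
  have "P \<noteq> 0" using assms by auto
  moreover have "monic p \<longleftrightarrow> normalize p = p" if "p dvd P"
    using that assms monic_if_normalized_dvd_monic normalize_monic by blast
  ultimately show ?thesis
    by (auto simp: in_prime_factors_iff prime_def irreducible_imp_prime_elem prime_elem_imp_irreducible)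
qed

lemma rsquarefree_dvd:
  fixes p q :: "'a::idom poly"
  assumes "p dvd q" and "rsquarefree q"
  shows "rsquarefree p"
proof -
  obtain r where q: "q = p * r" using assms(1) by blast
  with assms(2) have "p \<noteq> 0" "r \<noteq> 0" by (auto simp: rsquarefree_def)
  then have "order a q = order a p + order a r" for a by (simp add: q order_mult)
  with assms(2) \<open>p \<noteq> 0\<close> show ?thesis by (auto simp: rsquarefree_def)
qed

lemma rsquarefree_prod_linear_factors:
  "rsquarefree (\<Prod>z\<in>R. [:- z, 1:] :: 'a::idom poly)"
proof (induction R rule: infinite_finite_induct)
  case (insert x R)
  define Q :: "'a poly" where "Q = (\<Prod>z\<in>R. [:- z, 1:])"
  have Q0: "Q \<noteq> 0" using insert.IH by (simp add: Q_def rsquarefree_def)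
  have "order x Q = 0" using insert.hyps by (intro order_0I) (simp add: Q_def poly_prod)
  moreover have "order a [:- x, 1:] = (if a = x then 1 else 0)" for a
    using order_power_n_n[of x 1] by (auto intro: order_0I)
  moreover have "order a Q \<le> 1" for a
    using insert.IH unfolding Q_def rsquarefree_def by (metis le_refl zero_le_one)
  ultimately have "order a ([:- x, 1:] * Q) \<le> 1" for a
    using Q0 by (simp add: order_mult del: mult_pCons_left)
  moreover have "[:- x, 1:] * Q \<noteq> 0" using Q0 by (simp del: mult_pCons_left)
  ultimately show ?case
    unfolding rsquarefree_def prod.insert[OF insert.hyps] Q_def[symmetric] by (simp add: le_Suc_eq)
qed (simp_all add: rsquarefree_def)

lemma complex_poly_eq_prod_linear_factors:
  fixes p :: "complex poly"
  assumes "monic p" and "finite S" and "card S = degree p" and "\<And>z. z \<in> S \<Longrightarrow> poly p z = 0"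
  shows "p = (\<Prod>z\<in>S. [:- z, 1:])"
proof -
  have "p \<noteq> 0" using assms(1) by auto
  then have "mset_set S \<subseteq># proots p"
    using assms(2,4) order_root[of p] by (intro mset_subset_eqI) (auto simp: count_mset_set' Suc_le_eq)
  moreover have "size (proots p) \<le> size (mset_set S)"
    using assms(3) size_proots_le[of p] by simp
  ultimately have "proots p = mset_set S"
    using mset_subset_size subset_mset.le_imp_less_or_eq by fastforce
  then show ?thesis
    using complex_poly_decompose_multiset[of p] assms(1) by (simp add: prod_unfold_prod_mset)
qed

lemma of_int_poly_eq_prod_roots_if_dvd:
  fixes p P :: "int poly"
  assumes "monic p" and "p dvd P" and "rsquarefree (of_int_poly P :: complex poly)"
  shows "(of_int_poly p :: complex poly) = (\<Prod>z | poly (of_int_poly p) z = 0. [:- z, 1:])"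
proof -
  have "rsquarefree (of_int_poly p :: complex poly)"
    using assms(2,3) by (blast intro: rsquarefree_dvd of_int_poly_hom.hom_dvd)
  moreover have "lead_coeff (of_int_poly p :: complex poly) = 1"
    using assms(1) by (simp add: of_int_hom.hom_lead_coeff)
  ultimately show ?thesis
    using complex_poly_decompose_rsquarefree by (metis smult_1_left)
qed

lemma monic_irreducible_eq_if_common_root:
  fixes p q :: "int poly" and z :: complex
  assumes "monic p" "irreducible p" "monic q" "irreducible q"
    and "poly (of_int_poly p) z = 0" and "poly (of_int_poly q) z = 0"
  shows "p = q"
proof (rule associated_eqI)
  show "p dvd q" using irreducible_dvd_if_common_root assms(2,5,6) .
  show "q dvd p" using irreducible_dvd_if_common_root assms(4,6,5) .
qed (simp_all add: assms(1,3) normalize_monic)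

lemma prime_factor_root:
  fixes P :: "int poly" and z :: complex
  assumes "P \<noteq> 0" and "poly (of_int_poly P) z = 0"
  obtains p where "p \<in> prime_factors P" and "poly (of_int_poly p) z = 0"
proof -
  have "normalize (prod_mset (prime_factorization P)) = normalize P"
    using assms(1) by (rule prod_mset_prime_factorization_weak)
  then have "P dvd prod_mset (prime_factorization P)"
    by (simp add: associated_iff_dvd)
  then have "poly (of_int_poly (prod_mset (prime_factorization P))) z = 0"
    using assms(2) by (rule poly_of_int_poly_eq_0_if_dvd)
  then have "(\<Prod>p\<in>#prime_factorization P. poly (of_int_poly p) z) = 0"
    by (simp only: of_int_poly_hom.hom_prod_mset poly_prod_mset multiset.map_comp o_def)
  then show ?thesis
    using that by (auto simp: prod_mset_zero_iff)
qed

lemma of_int_poly_prod_new_prime_factors: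
  fixes P :: "int poly" and Q :: "'i \<Rightarrow> int poly"
  assumes monic: "monic P" and sqfree: "rsquarefree (of_int_poly P :: complex poly)"
  shows "(of_int_poly (\<Prod>{p. monic p \<and> irreducible p \<and> p dvd P \<and> (\<forall>k\<in>K. \<not> p dvd Q k)}) :: complex poly)
    = (\<Prod>z | poly (of_int_poly P) z = 0 \<and> (\<forall>k\<in>K. poly (of_int_poly (Q k)) z \<noteq> 0). [:- z, 1:])"
    (is "of_int_poly (\<Prod>?S) = (\<Prod>z\<in>?new. _)")
proof -
  define roots where "roots p = {z::complex. poly (of_int_poly p) z = 0}" for p
  have S: "p \<in> ?S \<longleftrightarrow> p \<in> prime_factors P \<and> (\<forall>k\<in>K. \<not> p dvd Q k)" for p
    using monic_irreducible_dvd_iff_prime_factor[OF monic] by blast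
  then have "finite ?S" by (auto intro: finite_subset[of _ "prime_factors P"])
  have "finite (roots p)" if "p \<in> ?S" for p
    using that poly_roots_finite[of "of_int_poly p :: complex poly"] unfolding roots_def by fastforce
  moreover have "roots p \<inter> roots q = {}" if "p \<in> ?S" "q \<in> ?S" "p \<noteq> q" for p q
    using that monic_irreducible_eq_if_common_root[of p q] unfolding roots_def by auto
  moreover have "\<Union>(roots ` ?S) = ?new"
  proof
    show "\<Union>(roots ` ?S) \<subseteq> ?new"
      using irreducible_dvd_if_common_root poly_of_int_poly_eq_0_if_dvd unfolding roots_def by blast
    show "?new \<subseteq> \<Union>(roots ` ?S)"
    proof
      fix z assume z: "z \<in> ?new"
      moreover have "P \<noteq> 0" using monic by auto
      ultimately obtain p where "p \<in> prime_factors P" "z \<in> roots p"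
        using prime_factor_root[of P z] unfolding roots_def by blast
      moreover have "\<not> p dvd Q k" if "k \<in> K" for k
        using z that \<open>z \<in> roots p\<close> poly_of_int_poly_eq_0_if_dvd unfolding roots_def by blast
      ultimately show "z \<in> \<Union>(roots ` ?S)" using S by blast
    qed
  qed
  ultimately have "(\<Prod>p\<in>?S. \<Prod>z\<in>roots p. [:- z, 1:]) = (\<Prod>z\<in>?new. [:- z, 1:])"
    using prod.UNION_disjoint[OF \<open>finite ?S\<close>, of roots "\<lambda>z. [:- z, 1:]"] by auto
  moreover have "of_int_poly p = (\<Prod>z\<in>roots p. [:- z, 1:])" if "p \<in> ?S" for p
    using that sqfree of_int_poly_eq_prod_roots_if_dvd unfolding roots_def by blast
  ultimately show ?thesis
    by (simp add: of_int_poly_hom.hom_prod)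
qed

section \<open>Roots of Fibonacci and fibotomic polynomials\<close>

lemma fibpoly_monic_degree: "0 < n \<Longrightarrow> monic (fibpoly n) \<and> degree (fibpoly n) = n - 1"
proof (induction n rule: fibpoly.induct)
  case (4 n)
  let ?F = "[:0, 1:] * fibpoly (Suc (Suc n))"
  have "fibpoly (Suc (Suc n)) \<noteq> 0" using "4.IH"(1) by auto
  then have "degree ?F = Suc (Suc n)"
    using "4.IH"(1) by (simp add: degree_mult_eq del: mult_pCons_left)
  moreover have "monic ?F"
    using "4.IH"(1) by (simp only: lead_coeff_mult) auto
  moreover have "degree (fibpoly (Suc n)) < Suc (Suc n)"
    using "4.IH"(2) by simp
  ultimately show ?case
    by (simp add: lead_coeff_add_le degree_add_eq_left coeff_eq_0 del: mult_pCons_left)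
qed simp_all

lemma poly_fibpoly_cos:
  "poly (of_int_poly (fibpoly n)) (2 * \<i> * complex_of_real (cos t)) * complex_of_real (sin t)
     = \<i> ^ (n - 1) * complex_of_real (sin (real n * t))"
proof (induction n rule: fibpoly.induct)
  case 3
  then show ?case by (simp add: sin_double)
next
  case (4 n)
  have "real (Suc (Suc n)) * t + t = real (Suc (Suc (Suc n))) * t"
    and "real (Suc (Suc n)) * t - t = real (Suc n) * t"
    by (simp_all add: algebra_simps)
  then have "2 * cos t * sin (real (Suc (Suc n)) * t)
      = sin (real (Suc (Suc (Suc n))) * t) + sin (real (Suc n) * t)"
    using sin_times_cos[of "real (Suc (Suc n)) * t" t] by (simp add: mult_ac)
  then have trig: "sin (real (Suc n) * t) - 2 * cos t * sin (real (Suc (Suc n)) * t)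
      = - sin (real (Suc (Suc (Suc n))) * t)"
    by simp
  define x where "x = 2 * \<i> * complex_of_real (cos t)"
  let ?P = "\<lambda>k. poly (of_int_poly (fibpoly k)) x * complex_of_real (sin t)"
  have "?P (Suc (Suc (Suc n))) = x * ?P (Suc (Suc n)) + ?P (Suc n)"
    by (simp add: of_int_poly_hom.hom_add of_int_poly_hom.hom_mult algebra_simps del: mult_pCons_left)
  also have "\<dots> = \<i> ^ n
      * complex_of_real (sin (real (Suc n) * t) - 2 * cos t * sin (real (Suc (Suc n)) * t))"
    using "4.IH" unfolding x_def by (simp add: algebra_simps)
  finally show ?case
    unfolding trig x_def by simp
qed simp_all

definition fib_root :: "nat \<Rightarrow> nat \<Rightarrow> complex" where
  "fib_root n k = 2 * \<i> * complex_of_real (cos (pi * real k / real n))"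

lemma fib_root_eq_iff:
  assumes "0 < n" "0 < n'" "k \<le> n" "k' \<le> n'"
  shows "fib_root n k = fib_root n' k' \<longleftrightarrow> k * n' = k' * n"
proof -
  have range: "0 \<le> pi * real j / real m \<and> pi * real j / real m \<le> pi" if "0 < m" "j \<le> m" for j m
    using that by (auto simp: divide_le_eq intro!: mult_left_mono)
  have "fib_root n k = fib_root n' k' \<longleftrightarrow> cos (pi * real k / real n) = cos (pi * real k' / real n')"
    by (simp add: fib_root_def)
  also have "\<dots> \<longleftrightarrow> pi * real k / real n = pi * real k' / real n'"
    using cos_inj_pi range[OF assms(1,3)] range[OF assms(2,4)] by metis
  also have "\<dots> \<longleftrightarrow> real k * real n' = real k' * real n"
    using assms by (simp add: field_simps)
  also have "\<dots> \<longleftrightarrow> k * n' = k' * n"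
    by (metis of_nat_eq_iff of_nat_mult)
  finally show ?thesis .
qed

lemma fibpoly_fib_root:
  assumes k: "k \<in> {1..<n}"
  shows "poly (of_int_poly (fibpoly n)) (fib_root n k) = 0"
proof -
  define t where "t = pi * real k / real n"
  have "0 < t" "t < pi" using k by (auto simp: t_def field_simps)
  then have "sin t \<noteq> 0" using sin_gt_zero by force
  moreover have "sin (real n * t) = 0"
    using k by (simp add: t_def sin_npi2)
  ultimately show ?thesis
    using poly_fibpoly_cos[of n t] by (simp add: fib_root_def t_def)
qed

lemma of_int_fibpoly:
  assumes "0 < n"
  shows "of_int_poly (fibpoly n) = (\<Prod>z\<in>fib_root n ` {1..<n}. [:- z, 1:])"
proof (rule complex_poly_eq_prod_linear_factors)
  have "inj_on (fib_root n) {1..<n}"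
    using assms by (intro inj_onI) (auto simp: fib_root_eq_iff)
  then show "card (fib_root n ` {1..<n}) = degree (of_int_poly (fibpoly n) :: complex poly)"
    using fibpoly_monic_degree[OF assms] by (simp add: card_image of_int_hom.degree_map_poly_hom)
  show "monic (of_int_poly (fibpoly n) :: complex poly)"
    using fibpoly_monic_degree[OF assms]
    by (auto simp: of_int_hom.hom_lead_coeff of_int_hom.degree_map_poly_hom)
qed (auto intro: fibpoly_fib_root)

lemma fibpoly_root_iff:
  "0 < n \<Longrightarrow> poly (of_int_poly (fibpoly n)) z = 0 \<longleftrightarrow> z \<in> fib_root n ` {1..<n}"
  by (simp add: of_int_fibpoly poly_prod)

lemma fibpoly_earlier_root_if_not_coprime:
  assumes k: "k \<in> {1..<n}" and "\<not> coprime k n"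
  obtains n' where "n' \<in> {1..<n}" and "poly (of_int_poly (fibpoly n')) (fib_root n k) = 0"
proof -
  define g where "g = gcd k n"
  obtain k' n' where kn: "k = k' * g" "n = n' * g"
    unfolding g_def by (metis gcd_dvd1 gcd_dvd2 dvdE mult.commute)
  have "g \<noteq> 1" "g \<noteq> 0"
    using assms unfolding g_def by (auto simp: coprime_iff_gcd_eq_1)
  then have "1 * n' < g * n'" "k' * g < n' * g" "0 < k' * g"
    using k kn by auto
  then have "k' \<in> {1..<n'}" "n' \<in> {1..<n}"
    using kn by auto
  moreover have "fib_root n k = fib_root n' k'"
    using k kn \<open>n' \<in> {1..<n}\<close> \<open>k' \<in> {1..<n'}\<close> by (subst fib_root_eq_iff) auto
  ultimately show ?thesis
    using that[of n'] fibpoly_fib_root[of k' n'] by simp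
qed

lemma fibpoly_not_root_if_totative:
  assumes "2 \<le> n" and k: "k \<in> totatives n" and m: "m \<in> {1..<n}"
  shows "poly (of_int_poly (fibpoly m)) (fib_root n k) \<noteq> 0"
proof
  assume "poly (of_int_poly (fibpoly m)) (fib_root n k) = 0"
  then obtain j where "j \<in> {1..<m}" "fib_root n k = fib_root m j"
    using m fibpoly_root_iff[of m] by auto
  then have "k * m = j * n"
    using assms totatives_less[of k n] fib_root_eq_iff[of n m k j] by (simp add: totatives_le)
  then have "n dvd k * m" by (metis dvd_triv_right)
  moreover have "coprime n k" using k by (simp add: in_totatives_iff ac_simps)
  ultimately have "n dvd m" by (simp add: coprime_dvd_mult_right_iff)
  then show False using m by (auto dest: dvd_imp_le)
qed

lemma fibpoly_new_roots:
  assumes "2 \<le> n"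
  shows "{z::complex. poly (of_int_poly (fibpoly n)) z = 0
      \<and> (\<forall>k\<in>{1..<n}. poly (of_int_poly (fibpoly k)) z \<noteq> 0)} = fib_root n ` totatives n" (is "?new = _")
proof (intro equalityI subsetI)
  fix z assume z: "z \<in> ?new"
  then obtain k where k: "k \<in> {1..<n}" "z = fib_root n k"
    using assms fibpoly_root_iff[of n] by auto
  then have "coprime k n"
    using z fibpoly_earlier_root_if_not_coprime by blast
  then show "z \<in> fib_root n ` totatives n"
    using k by (auto simp: in_totatives_iff)
next
  fix z assume "z \<in> fib_root n ` totatives n"
  then obtain k where k: "k \<in> totatives n" "z = fib_root n k" by blast
  then have "k \<in> {1..<n}"
    using assms totatives_less[of k n] by (auto simp: in_totatives_iff)
  then show "z \<in> ?new"
    using k assms fibpoly_fib_root fibpoly_not_root_if_totative by auto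
qed

lemma of_int_fibotomic:
  assumes "2 \<le> n"
  shows "(of_int_poly (fibotomic n) :: complex poly) = (\<Prod>k\<in>totatives n. [:- fib_root n k, 1:])"
proof -
  have "monic (fibpoly n)" using fibpoly_monic_degree[of n] assms by auto
  moreover have "rsquarefree (of_int_poly (fibpoly n) :: complex poly)"
    using of_int_fibpoly rsquarefree_prod_linear_factors assms by simp
  ultimately have "(of_int_poly (fibotomic n) :: complex poly)
      = (\<Prod>z\<in>fib_root n ` totatives n. [:- z, 1:])"
    using of_int_poly_prod_new_prime_factors[of "fibpoly n" "{1..<n}" fibpoly]
      fibpoly_new_roots[OF assms] assms
    by (simp add: fibotomic_def)
  moreover have "inj_on (fib_root n) (totatives n)"
    using assms by (intro inj_onI) (auto simp: fib_root_eq_iff in_totatives_iff)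
  ultimately show ?thesis by (simp add: prod.reindex)
qed

section \<open>Comparison with roots of unity\<close>

lemma cyclotomic_eq_prod_totatives:
  assumes "2 \<le> n"
  shows "cyclotomic n = (\<Prod>k\<in>totatives n. [:- cis (2 * pi * real k / real n), 1:])"
proof -
  have "{k. k < n \<and> coprime k n} = totatives n"
    using assms totatives_less[of _ n] by (force simp: in_totatives_iff)
  then show ?thesis by (simp add: cyclotomic_def)
qed

lemma bij_betw_totatives_reflect:
  assumes "2 \<le> n"
  shows "bij_betw (\<lambda>k. n - k) (totatives n) (totatives n)"
proof -
  have "n - k \<in> totatives n" if "k \<in> totatives n" for k
  proof -
    have "k < n" using that assms by (simp add: totatives_less)
    moreover have "gcd (n - k) n = gcd k n" using \<open>k < n\<close> by (simp add: gcd_diff2_nat)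
    ultimately show ?thesis using that by (simp add: in_totatives_iff coprime_iff_gcd_eq_1)
  qed
  then show ?thesis
    by (intro bij_betw_byWitness[where f' = "\<lambda>k. n - k"]) (auto dest: totatives_le)
qed

lemma sum_totatives:
  assumes "2 \<le> n"
  shows "2 * \<Sum>(totatives n) = n * totient n"
proof -
  have "\<Sum>(totatives n) = (\<Sum>k\<in>totatives n. n - k)"
    using sum.reindex_bij_betw[OF bij_betw_totatives_reflect[OF assms], of id] by simp
  then have "2 * \<Sum>(totatives n) = (\<Sum>k\<in>totatives n. k + (n - k))"
    by (simp add: sum.distrib)
  also have "\<dots> = (\<Sum>k\<in>totatives n. n)"
    by (intro sum.cong) (auto dest: totatives_le)
  finally show ?thesis by (simp add: totient_def)
qed

lemma prod_cis: "(\<Prod>x\<in>A. cis (f x)) = cis (\<Sum>x\<in>A. f x)"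
  by (induction A rule: infinite_finite_induct) (simp_all add: cis_mult)

lemma prod_cis_totatives:
  assumes "2 \<le> n"
  shows "(\<Prod>k\<in>totatives n. cis (pi * real k / real n)) = \<i> ^ totient n"
proof -
  have "(\<Sum>k\<in>totatives n. pi * real k / real n) = pi / real n * real (\<Sum>(totatives n))"
    by (simp add: sum_distrib_left)
  also have "\<dots> = real (totient n) * (pi / 2)"
    using arg_cong[OF sum_totatives[OF assms], of real] assms by (simp add: field_simps)
  finally have "(\<Prod>k\<in>totatives n. cis (pi * real k / real n)) = cis (real (totient n) * (pi / 2))"
    by (simp only: prod_cis)
  also have "\<dots> = cis (pi / 2) ^ totient n"
    by (rule Complex.DeMoivre[symmetric])
  finally show ?thesis by simp
qed

lemma cis_times_two_i_cos_diff:
  "cis b * (2 * \<i> * complex_of_real (cos a) - 2 * \<i> * complex_of_real (cos b))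
     = \<i> * ((cis a - cis b) * (cis b + cis (pi - a)))"
proof -
  have cos: "2 * \<i> * complex_of_real (cos x) = \<i> * (cis x + cis (- x))" for x
    by (simp add: complex_eq_iff)
  have "cis (pi - a) = - cis (- a)"
    by (simp add: minus_cis)
  moreover have "cis a * cis (- a) = 1" "cis b * cis (- b) = 1"
    by (simp_all add: cis_mult)
  moreover have "cis b * (\<i> * (cis a + cis (- a)) - \<i> * (cis b + cis (- b)))
      - \<i> * ((cis a - cis b) * (cis b - cis (- a))) = \<i> * (cis a * cis (- a) - cis b * cis (- b))"
    by (simp add: algebra_simps)
  ultimately show ?thesis
    unfolding cos by simp
qed

lemma prod_fib_root_diff:
  assumes "2 \<le> m" and "2 \<le> n"
  shows "(\<Prod>j\<in>totatives m. \<Prod>k\<in>totatives n. fib_root m j - fib_root n k)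
       = (\<Prod>j\<in>totatives m. \<Prod>k\<in>totatives n.
           cis (2 * pi * real j / real m) - cis (2 * pi * real k / real n))"
    (is "?D = ?C")
proof -
  define u where "u j = cis (pi * real j / real m)" for j
  define v where "v k = cis (pi * real k / real n)" for k
  define c where "c = \<i> ^ (totient n * totient m)"
  have "c * ?D = (\<Prod>j\<in>totatives m. \<Prod>k\<in>totatives n. v k * (fib_root m j - fib_root n k))"
    using prod_cis_totatives[OF assms(2)]
    by (simp add: c_def v_def prod.distrib totient_def power_mult)
  also have "\<dots> = (\<Prod>j\<in>totatives m. \<Prod>k\<in>totatives n. \<i> * ((u j - v k) * (v k + u (m - j))))"
  proof (intro prod.cong refl)
    fix j k assume "j \<in> totatives m"
    then have "pi - pi * real j / real m = pi * real (m - j) / real m"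
      using assms by (simp add: of_nat_diff totatives_le field_simps)
    then show "v k * (fib_root m j - fib_root n k) = \<i> * ((u j - v k) * (v k + u (m - j)))"
      using cis_times_two_i_cos_diff[of "pi * real k / real n" "pi * real j / real m"]
      by (simp add: u_def v_def fib_root_def)
  qed
  also have "\<dots> = c * ((\<Prod>j\<in>totatives m. \<Prod>k\<in>totatives n. u j - v k)
      * (\<Prod>j\<in>totatives m. \<Prod>k\<in>totatives n. v k + u (m - j)))"
    by (simp add: c_def prod.distrib totient_def power_mult)
  also have "(\<Prod>j\<in>totatives m. \<Prod>k\<in>totatives n. v k + u (m - j))
      = (\<Prod>j\<in>totatives m. \<Prod>k\<in>totatives n. v k + u j)"
    using prod.reindex_bij_betw[OF bij_betw_totatives_reflect[OF assms(1)],
        of "\<lambda>j. \<Prod>k\<in>totatives n. v k + u j"] by simp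
  also have "(\<Prod>j\<in>totatives m. \<Prod>k\<in>totatives n. u j - v k) * \<dots>
      = (\<Prod>j\<in>totatives m. \<Prod>k\<in>totatives n. u j ^ 2 - v k ^ 2)"
    by (simp add: power2_eq_square algebra_simps flip: prod.distrib)
  also have "\<dots> = ?C"
    by (simp add: u_def v_def Complex.DeMoivre mult.assoc)
  finally show ?thesis
    by (simp add: c_def)
qed

theorem mainTheorem9:
  fixes m n :: nat
  assumes "2 \<le> m" and "m < n"
  shows "resultant (map_poly of_int (fibotomic m)) (map_poly of_int (fibotomic n))
         = resultant (cyclotomic m) (cyclotomic n)"
proof -
  have n: "2 \<le> n" using assms by simp
  have "resultant (map_poly of_int (fibotomic m)) (map_poly of_int (fibotomic n))
      = (\<Prod>j\<in>totatives m. \<Prod>k\<in>totatives n. fib_root m j - fib_root n k)"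
    by (simp only: of_int_fibotomic[OF assms(1)] of_int_fibotomic[OF n] resultant_prod_linear_factors)
  also have "\<dots> = (\<Prod>j\<in>totatives m. \<Prod>k\<in>totatives n.
      cis (2 * pi * real j / real m) - cis (2 * pi * real k / real n))"
    by (rule prod_fib_root_diff[OF assms(1) n])
  also have "\<dots> = resultant (cyclotomic m) (cyclotomic n)"
    by (simp only: cyclotomic_eq_prod_totatives[OF assms(1)] cyclotomic_eq_prod_totatives[OF n]
        resultant_prod_linear_factors)
  finally show ?thesis .
qed

end
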